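(* Assume $\lfloor (M_1+\dots+M_n)/p\rfloor=n-1$ (ample reduction). Then for every $l\in\{1,\dots,n-1\}$ and every subset $I\subset\{1,\dots,n\}$ with $|I|=l$ we have $(l-1)p<\sum_{i\in I}M_i<lp$.
   Context: $p,q$ are primes, $n$ a positive integer with $p>n\ge2$, $p>q$; $m_1,\dots,m_n$ are positive integers $<q$, and $M_i$ is the least positive integer with $M_i\equiv -m_iq^{-1}\pmod p$ (so $1\le M_i\le p-1$). *)

theory Defs
  imports "HOL-Number_Theory.Number_Theory"
begin

definition reducedM :: "nat \<Rightarrow> nat \<Rightarrow> nat \<Rightarrow> nat" where
  "reducedM p q m = (LEAST x::nat. 0 < x \<and>
      [int x = - int m * modular_inverse (int p) (int q)] (mod int p))"

end

theory Submission
  imports Defs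
begin

text \<open>
  Since \<open>-m\<^sub>i q\<^sup>-\<^sup>1\<close> is a nonzero residue modulo \<open>p\<close>, each \<open>M\<^sub>i\<close> is at most \<open>p - 1\<close>. This gives
  \<open>\<Sum>\<^sub>I M\<^sub>i < l p\<close> at once. Conversely, the complement of \<open>I\<close> has \<open>n - l \<ge> 1\<close>
  elements and contributes at most \<open>(n - l)(p - 1)\<close>, while the total is at least
  \<open>(n - 1) p\<close>; hence \<open>\<Sum>\<^sub>I M\<^sub>i \<ge> (l - 1) p + (n - l) > (l - 1) p\<close>.
\<close>

lemma reducedM_less:
  assumes "1 < p" and "coprime q p" and "coprime m p"
  shows "reducedM p q m < p"
proof -
  define r where "r = - int m * modular_inverse (int p) (int q)"
  have "coprime (modular_inverse (int p) (int q)) (int p)"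
    using assms(2) by (intro coprime_modular_inverse) simp
  with assms(3) have "coprime r (int p)"
    unfolding r_def by simp
  with assms(1) have "r mod int p \<noteq> 0"
    by auto
  moreover have "0 \<le> r mod int p" "r mod int p < int p"
    using assms(1) by simp_all
  moreover have "[int (nat (r mod int p)) = r] (mod int p)"
    using assms(1) by (simp add: cong_def)
  ultimately have "reducedM p q m \<le> nat (r mod int p)"
    unfolding reducedM_def r_def by (intro Least_le) simp
  also have "\<dots> < p"
    using \<open>0 \<le> r mod int p\<close> \<open>r mod int p < int p\<close> by (simp add: nat_less_iff)
  finally show ?thesis .
qed

lemma sum_less_card_mult:
  fixes f :: "'a \<Rightarrow> nat"
  assumes "finite I" and "I \<noteq> {}" and "\<forall>i\<in>I. f i < p"
  shows "sum f I < card I * p"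
proof -
  have "sum f I < (\<Sum>i\<in>I. p)"
    using assms by (intro sum_strict_mono) auto
  then show ?thesis
    by simp
qed

lemma card_minus_one_mult_less_sum_subset:
  fixes f :: "'a \<Rightarrow> nat"
  assumes "finite A" and "\<forall>i\<in>A. f i < p" and "(card A - 1) * p \<le> sum f A"
    and "I \<subset> A" and "I \<noteq> {}"
  shows "(card I - 1) * p < sum f I"
proof -
  define J where "J = A - I"
  have "finite I" "finite J"
    using assms(1,4) finite_subset unfolding J_def by auto
  have card_A: "card A = card I + card J"
    using assms(1,4) \<open>finite I\<close> card_Diff_subset[of I A] card_mono[of A I]
    unfolding J_def by auto
  have "card I \<ge> 1" "card J \<ge> 1"
    using \<open>finite I\<close> \<open>finite J\<close> assms(4,5) unfolding J_def
    by (auto simp: Suc_le_eq card_gt_0_iff)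
  have sum_A: "sum f A = sum f I + sum f J"
    using assms(1,4) sum.subset_diff[of I A f] unfolding J_def by auto
  have "sum f J + card J \<le> card J * p"
  proof -
    have "(\<Sum>i\<in>J. f i + 1) \<le> (\<Sum>i\<in>J. p)"
      using assms(2) unfolding J_def by (intro sum_mono) (auto simp: Suc_le_eq)
    then show ?thesis
      by (simp add: sum_Suc)
  qed
  moreover have "(card A - 1) * p = (card I - 1) * p + card J * p"
    using card_A \<open>card I \<ge> 1\<close> by (simp add: algebra_simps)
  ultimately have "(card I - 1) * p + card J \<le> sum f I"
    using assms(3) sum_A by linarith
  with \<open>card J \<ge> 1\<close> show ?thesis
    by linarith
qed

theorem lemma2p7:
  fixes p q n :: nat and m M :: "nat \<Rightarrow> nat"
  assumes "prime p" and "prime q" and "2 \<le> n" and "n < p" and "q < p"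
    and "\<forall>i\<in>{1..n}. 0 < m i \<and> m i < q"
    and "\<forall>i\<in>{1..n}. M i = reducedM p q (m i)"
    and "(\<Sum>i\<in>{1..n}. M i) div p = n - 1"
  shows "\<forall>l\<in>{1..n-1}. \<forall>I. I \<subseteq> {1..n} \<and> card I = l \<longrightarrow>
           (l - 1) * p < (\<Sum>i\<in>I. M i) \<and> (\<Sum>i\<in>I. M i) < l * p"
proof (intro ballI allI impI)
  fix l I
  assume l: "l \<in> {1..n-1}" and I: "I \<subseteq> {1..n} \<and> card I = l"
  have coprime_below_p: "coprime k p" if "0 < k" "k < p" for k
    using assms(1) that by (simp add: prime_nat_iff'' coprime_commute)
  have "0 < q"
    using assms(2) by (simp add: prime_gt_0_nat)
  then have M_less: "\<forall>i\<in>{1..n}. M i < p"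
    using assms(1,5-7) coprime_below_p by (auto intro!: reducedM_less prime_gt_1_nat)
  have "I \<noteq> {}" "finite I" "I \<subset> {1..n}"
    using I l by (auto intro: card_ge_0_finite dest: psubset_card_mono)
  moreover have "(card {1..n} - 1) * p \<le> (\<Sum>i\<in>{1..n}. M i)"
    using div_times_less_eq_dividend[of "\<Sum>i\<in>{1..n}. M i" p] unfolding assms(8) by simp
  ultimately have "(card I - 1) * p < (\<Sum>i\<in>I. M i)" "(\<Sum>i\<in>I. M i) < card I * p"
    using M_less card_minus_one_mult_less_sum_subset[of "{1..n}" M p I]
      sum_less_card_mult[of I M p] by auto
  with I show "(l - 1) * p < (\<Sum>i\<in>I. M i) \<and> (\<Sum>i\<in>I. M i) < l * p"
    by simp
qed

end
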